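(* Let $\mu$ be a nonempty Young diagram, $p=\mu_1-1$ and $q=\mu'_1-1$. Then $s_{\mu;a}$ depends only on the $p+q$ parameters $a_1,\dots,a_p$ and $\widehat a_1,\dots,\widehat a_q$, i.e. on $a_i$ for $1-q\le i\le p$: if two sequences $a,b$ satisfy $a_i=b_i$ for all $1-q\le i\le p$, then $s_{\mu;a}=s_{\mu;b}$.
   Context: $\Lambda$ is the algebra of symmetric functions over $\mathbb C$ with complete homogeneous $h_k$ and elementary $e_k$. For a sequence $a=(a_i)_{i\in\mathbb Z}$ of complex numbers define $h_{k;a}=\sum_{i=1}^k(-1)^{k-i}e_{k-i}(a_1,\dots,a_{k-1})h_i$ for $k\ge1$, $h_{0;a}=1$, $h_{k;a}=0$ for $k<0$; let $(\tau^ra)_i=a_{i+r}$; and set $s_{\mu;a}=\det[h_{\mu_i-i+j;\,\tau^{1-j}a}]_{i,j=1}^N$ for any $N\ge\ell(\mu)$. The dual sequence is $\widehat a_i=-a_{1-i}$, so $(\widehat a_1,\dots,\widehat a_q)=(-a_0,-a_{-1},\dots,-a_{1-q})$. $\mu'$ is the transposed diagram. *)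

theory Defs
  imports Complex_Main "HOL-Library.Poly_Mapping" "HOL-Combinatorics.Permutations"
begin

text \<open>The ring of symmetric functions over the complex numbers, realised as the
  free commutative polynomial algebra over C in the complete homogeneous
  generators h_1, h_2, ... (monomials are finitely supported exponent vectors).\<close>
type_synonym sym = "(nat \<Rightarrow>\<^sub>0 nat) \<Rightarrow>\<^sub>0 complex"

definition sconst :: "complex \<Rightarrow> sym" where
  "sconst c = Poly_Mapping.single 0 c"

definition hsym :: "int \<Rightarrow> sym" where
  "hsym k = (if k = 0 then 1 else if k < 0 then 0
             else Poly_Mapping.single (Poly_Mapping.single (nat k) 1) 1)"

definition esym :: "nat \<Rightarrow> int set \<Rightarrow> (int \<Rightarrow> complex) \<Rightarrow> complex" where
  "esym j I a = (\<Sum>S | S \<subseteq> I \<and> card S = j. \<Prod>i\<in>S. a i)"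

definition hshift :: "int \<Rightarrow> (int \<Rightarrow> complex) \<Rightarrow> sym" where
  "hshift k a = (if k = 0 then 1 else if k < 0 then 0
     else (\<Sum>i\<in>{1..k}. sconst ((-1) ^ nat (k - i) * esym (nat (k - i)) {1..k-1} a) * hsym i))"

definition tau :: "int \<Rightarrow> (int \<Rightarrow> complex) \<Rightarrow> (int \<Rightarrow> complex)" where
  "tau r a = (\<lambda>i. a (i + r))"

definition det_sq :: "nat \<Rightarrow> (nat \<Rightarrow> nat \<Rightarrow> sym) \<Rightarrow> sym" where
  "det_sq N M = (\<Sum>\<sigma> | \<sigma> permutes {..<N}. of_int (sign \<sigma>) * (\<Prod>i<N. M i (\<sigma> i)))"

definition partition :: "nat list \<Rightarrow> bool" where
  "partition mu \<longleftrightarrow> sorted_wrt (\<ge>) mu \<and> (\<forall>x\<in>set mu. 0 < x)"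

text \<open>s_{mu;a} = det[h_{mu_i - i + j; tau^{1-j} a}]_{i,j=1..N}, N = length mu
  (0-based indices i, j below).\<close>
definition schur :: "nat list \<Rightarrow> (int \<Rightarrow> complex) \<Rightarrow> sym" where
  "schur mu a = det_sq (length mu)
     (\<lambda>i j. hshift (int (mu ! i) - int i + int j) (tau (- int j) a))"

end

theory Submission
  imports Defs
begin

text \<open>The entry in row i and column j (0-based) of the determinant defining s_{mu;a} is
  h_{k;tau^{-j} a} with k = mu_i - i + j, which only involves a_{1-j}, ..., a_{mu_i-i-1}.
  Since j < length mu and mu_i \<le> mu_1, all these indices lie in the window [1-q, p].\<close>

lemma esym_cong:
  assumes "\<And>i. i \<in> I \<Longrightarrow> c i = d i"
  shows "esym j I c = esym j I d"
  unfolding esym_def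
  by (rule sum.cong) (use assms in \<open>auto intro!: prod.cong\<close>)

lemma hshift_cong:
  assumes "\<And>i. i \<in> {1..k-1} \<Longrightarrow> c i = d i"
  shows "hshift k c = hshift k d"
proof -
  have "esym n {1..k-1} c = esym n {1..k-1} d" for n
    using assms by (rule esym_cong)
  then show ?thesis unfolding hshift_def by simp
qed

lemma det_sq_cong:
  assumes "\<And>i j. i < N \<Longrightarrow> j < N \<Longrightarrow> M i j = M' i j"
  shows "det_sq N M = det_sq N M'"
  unfolding det_sq_def
proof (rule sum.cong[OF refl])
  fix \<sigma> assume "\<sigma> \<in> {\<sigma>. \<sigma> permutes {..<N}}"
  then have "\<sigma> i < N" if "i < N" for i
    using that by (auto dest: permutes_in_image)
  then show "of_int (sign \<sigma>) * (\<Prod>i<N. M i (\<sigma> i)) = of_int (sign \<sigma>) * (\<Prod>i<N. M' i (\<sigma> i))"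
    using assms by (auto intro!: prod.cong)
qed

lemma partition_nth_le_hd:
  assumes "partition mu" and "i < length mu"
  shows "mu ! i \<le> hd mu"
proof -
  have "hd mu = mu ! 0"
    using assms(2) by (cases mu) simp_all
  then show ?thesis
    using assms unfolding partition_def
    by (cases i) (auto simp: sorted_wrt_iff_nth_less)
qed

lemma schur_cong:
  assumes "partition mu"
    and "\<And>i. 1 - (int (length mu) - 1) \<le> i \<Longrightarrow> i \<le> int (hd mu) - 1 \<Longrightarrow> a i = b i"
  shows "schur mu a = schur mu b"
  unfolding schur_def
proof (rule det_sq_cong, rule hshift_cong)
  fix i j t
  assume ij: "i < length mu" "j < length mu"
    and t: "t \<in> {1..int (mu ! i) - int i + int j - 1}"
  have "mu ! i \<le> hd mu"
    using partition_nth_le_hd[OF assms(1) ij(1)] .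
  then have "1 - (int (length mu) - 1) \<le> t - int j" "t - int j \<le> int (hd mu) - 1"
    using t ij by auto
  then show "tau (- int j) a t = tau (- int j) b t"
    unfolding tau_def using assms(2) by simp
qed

theorem corollary8:
  fixes mu :: "nat list" and a b :: "int \<Rightarrow> complex" and p q :: int
  assumes "partition mu" and "mu \<noteq> []"
    and "p = int (hd mu) - 1" and "q = int (length mu) - 1"
    and "\<forall>i. 1 - q \<le> i \<and> i \<le> p \<longrightarrow> a i = b i"
  shows "schur mu a = schur mu b"
  using assms(1) by (rule schur_cong) (use assms(3-5) in auto)

end
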